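(* $t(K(12,4))=2$. Moreover, if $S$ is a vertex cut of $K(12,4)$ such that $\frac{|S|}{c(K(12,4)\setminus S)} = 2$, then $S$ is the complement of a maximum independent set of $K(12,4)$.
   Context: The Kneser graph $K(n,k)$ has as vertices the $k$-element subsets of $[n]=\{1,\dots,n\}$, two vertices being adjacent iff they are disjoint. A vertex cut is a set $S$ of vertices whose removal disconnects the graph; $c(G\setminus S)$ is the number of connected components after deleting $S$; the toughness is $t(G)=\min_S |S|/c(G\setminus S)$ over vertex cuts $S$. *)

theory Defs
  imports Complex_Main
begin

definition kneser_verts :: "nat \<Rightarrow> nat \<Rightarrow> nat set set" where
  "kneser_verts n k = {A. A \<subseteq> {1..n} \<and> card A = k}"

definition kneser_adj :: "nat set \<Rightarrow> nat set \<Rightarrow> bool" where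
  "kneser_adj A B \<longleftrightarrow> A \<inter> B = {}"

definition induced_conn :: "'a set \<Rightarrow> ('a \<Rightarrow> 'a \<Rightarrow> bool) \<Rightarrow> 'a rel" where
  "induced_conn W E = (Id_on W) \<union> {(x, y). x \<in> W \<and> y \<in> W \<and> E x y}\<^sup>+"

definition components :: "'a set \<Rightarrow> ('a \<Rightarrow> 'a \<Rightarrow> bool) \<Rightarrow> 'a set set" where
  "components W E = W // induced_conn W E"

definition num_components :: "'a set \<Rightarrow> ('a \<Rightarrow> 'a \<Rightarrow> bool) \<Rightarrow> nat" where
  "num_components W E = card (components W E)"

definition vertex_cut :: "'a set \<Rightarrow> ('a \<Rightarrow> 'a \<Rightarrow> bool) \<Rightarrow> 'a set \<Rightarrow> bool" where
  "vertex_cut V E S \<longleftrightarrow> S \<subseteq> V \<and> num_components (V - S) E \<ge> 2"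

definition toughness :: "'a set \<Rightarrow> ('a \<Rightarrow> 'a \<Rightarrow> bool) \<Rightarrow> real" where
  "toughness V E = Inf {real (card S) / real (num_components (V - S) E) | S. vertex_cut V E S}"

definition independent_set :: "'a set \<Rightarrow> ('a \<Rightarrow> 'a \<Rightarrow> bool) \<Rightarrow> 'a set \<Rightarrow> bool" where
  "independent_set V E I \<longleftrightarrow> I \<subseteq> V \<and> (\<forall>x\<in>I. \<forall>y\<in>I. \<not> E x y)"

definition max_independent_set :: "'a set \<Rightarrow> ('a \<Rightarrow> 'a \<Rightarrow> bool) \<Rightarrow> 'a set \<Rightarrow> bool" where
  "max_independent_set V E I \<longleftrightarrow> independent_set V E I \<and>
     (\<forall>J. independent_set V E J \<longrightarrow> card J \<le> card I)"

end

theory Submission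
  imports Defs
begin

(* Let S be a vertex cut of K(3k, k) with k >= 3.  For a vertex x, the map
   y |-> [3k] - x - y matches the C(2k, k) neighbours of x in adjacent pairs, so each
   pair meets at most one component of K - S.  Weigh a component C by the number of
   (x, y) with x in S and y in a pair at x meeting C; the weights sum to at most
   C(2k, k) |S|.  Counting edges between C and S shows that every weight is at least
   2 C(2k, k), strictly so if |C| >= 2; the key input is that a vertex of C has at
   least k + 1 neighbours in S, namely its common neighbours with a vertex of another
   component.  Hence |S| >= 2 c(K - S), with equality only if K - S is independent.
   Applied to the complement of an independent set J this gives the Erdos-Ko-Rado
   bound |J| <= C(3k - 1, k - 1), and the star of a point attains the ratio 2. *)

section \<open>Connected components of induced subgraphs\<close>

lemma equiv_induced_conn:
  assumes "symp E"
  shows "equiv W (induced_conn W E)"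
proof -
  let ?r = "{(x, y). x \<in> W \<and> y \<in> W \<and> E x y}"
  have "?r\<^sup>+ \<subseteq> W \<times> W"
    by (rule trancl_subset_Sigma) auto
  moreover have "sym (?r\<^sup>+)"
    using assms by (intro sym_trancl) (auto simp: sym_def symp_def)
  ultimately show ?thesis
    unfolding induced_conn_def
    by (intro equivI) (auto simp: refl_on_def sym_def trans_def intro: trancl_trans)
qed

lemma finite_components: "finite W \<Longrightarrow> finite (components W E)"
  unfolding components_def induced_conn_def
  by (rule finite_quotient) (auto dest: trancl_subset_Sigma[THEN subsetD, rotated])

lemma components_subset: "C \<in> components W E \<Longrightarrow> C \<subseteq> W"
  unfolding components_def induced_conn_def
  by (auto simp: quotient_def dest: trancl_subset_Sigma[THEN subsetD, rotated])

lemma components_nonempty: "symp E \<Longrightarrow> C \<in> components W E \<Longrightarrow> C \<noteq> {}"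
  unfolding components_def by (metis equiv_induced_conn in_quotient_imp_non_empty)

lemma components_disjoint:
  "symp E \<Longrightarrow> C \<in> components W E \<Longrightarrow> C' \<in> components W E \<Longrightarrow> C \<noteq> C' \<Longrightarrow> C \<inter> C' = {}"
  unfolding components_def by (metis equiv_induced_conn quotient_disj)

lemma Union_components: "symp E \<Longrightarrow> \<Union> (components W E) = W"
  unfolding components_def by (metis equiv_induced_conn Union_quotient)

lemma component_closed:
  assumes "symp E" "C \<in> components W E" "x \<in> C" "y \<in> W" "E x y"
  shows "y \<in> C"
proof -
  have "x \<in> W" using assms components_subset by blast
  then have "(x, y) \<in> induced_conn W E"
    using assms unfolding induced_conn_def by auto
  then show ?thesis
    using assms unfolding components_def by (metis equiv_induced_conn in_quotient_imp_closed)
qed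

lemma exists_outside_component:
  assumes "symp E" "2 \<le> num_components W E" "C \<in> components W E"
  obtains d where "d \<in> W - C"
proof -
  have "components W E \<noteq> {C}"
    using assms(2) unfolding num_components_def by auto
  then obtain C' where "C' \<in> components W E" "C' \<noteq> C"
    using assms(3) by blast
  then show ?thesis
    using that components_nonempty[OF assms(1)] components_subset components_disjoint[OF assms(1) assms(3)]
    by blast
qed

lemma components_trivial_adjacent_eq:
  assumes "symp E" "finite W" "\<And>C. C \<in> components W E \<Longrightarrow> card C \<le> 1"
    and "x \<in> W" "y \<in> W" "E x y"
  shows "x = y"
proof -
  obtain C where C: "C \<in> components W E" "x \<in> C"
    using assms(4) Union_components[OF assms(1)] by blast
  moreover have "y \<in> C"
    using component_closed[OF assms(1) C assms(5,6)] .
  moreover have "finite C"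
    using finite_subset[OF components_subset[OF C(1)] assms(2)] .
  ultimately show ?thesis
    using assms(3) card_le_Suc0_iff_eq by (metis One_nat_def)
qed

lemma num_components_edgeless:
  assumes "\<And>x y. x \<in> W \<Longrightarrow> y \<in> W \<Longrightarrow> \<not> E x y"
  shows "num_components W E = card W"
proof -
  have "{(x, y). x \<in> W \<and> y \<in> W \<and> E x y} = {}"
    using assms by auto
  then have "induced_conn W E = Id_on W"
    unfolding induced_conn_def by (simp only: trancl_empty) simp
  then have "components W E = (\<lambda>a. {a}) ` W"
    unfolding components_def quotient_def by auto
  then show ?thesis
    unfolding num_components_def by (simp add: card_image)
qed

section \<open>Kneser graphs\<close>

definition kneser_nbrs :: "nat \<Rightarrow> nat \<Rightarrow> nat set \<Rightarrow> nat set set" where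
  "kneser_nbrs n k x = {y \<in> kneser_verts n k. kneser_adj x y}"

lemma symp_kneser_adj: "symp kneser_adj"
  unfolding symp_def kneser_adj_def by blast

lemma kneser_verts_iff: "x \<in> kneser_verts n k \<longleftrightarrow> x \<subseteq> {1..n} \<and> card x = k"
  unfolding kneser_verts_def by simp

lemma finite_kneser_vert: "x \<in> kneser_verts n k \<Longrightarrow> finite x"
  unfolding kneser_verts_iff using finite_subset by blast

lemma finite_kneser_verts: "finite (kneser_verts n k)"
  unfolding kneser_verts_def by (rule finite_subset[of _ "Pow {1..n}"]) auto

lemma card_kneser_verts: "card (kneser_verts n k) = n choose k"
  unfolding kneser_verts_def by (simp add: n_subsets)

lemma kneser_adj_irrefl: "x \<in> kneser_verts n k \<Longrightarrow> 0 < k \<Longrightarrow> \<not> kneser_adj x x"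
  unfolding kneser_adj_def kneser_verts_iff by auto

lemma kneser_nbrs_subset: "kneser_nbrs n k x \<subseteq> kneser_verts n k"
  unfolding kneser_nbrs_def by blast

lemma finite_kneser_nbrs: "finite (kneser_nbrs n k x)"
  using finite_subset[OF kneser_nbrs_subset finite_kneser_verts] .

lemma card_kneser_nbrs:
  assumes "x \<in> kneser_verts n k"
  shows "card (kneser_nbrs n k x) = (n - k) choose k"
proof -
  have "kneser_nbrs n k x = {y. y \<subseteq> {1..n} - x \<and> card y = k}"
    unfolding kneser_nbrs_def kneser_verts_def kneser_adj_def by auto
  moreover have "card ({1..n} - x) = n - k"
    using assms finite_kneser_vert[OF assms] by (simp add: kneser_verts_iff card_Diff_subset)
  ultimately show ?thesis
    by (simp add: n_subsets)
qed

lemma common_kneser_nbrs_ge: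
  assumes "v \<in> kneser_verts n k" "d \<in> kneser_verts n k" "\<not> kneser_adj v d"
  shows "(n + 1 - 2 * k) choose k \<le> card (kneser_nbrs n k v \<inter> kneser_nbrs n k d)"
proof -
  have fin: "finite v" "finite d"
    using assms finite_kneser_vert by blast+
  have "1 \<le> card (v \<inter> d)"
    using assms fin by (simp add: kneser_adj_def Suc_le_eq card_gt_0_iff)
  then have "card (v \<union> d) + 1 \<le> 2 * k"
    using card_Un_Int[OF fin] assms by (simp add: kneser_verts_iff)
  moreover have "v \<union> d \<subseteq> {1..n}"
    using assms by (auto simp: kneser_verts_iff)
  ultimately have "n + 1 - 2 * k \<le> card ({1..n} - (v \<union> d))"
    by (simp add: card_Diff_subset fin)
  then obtain T where T: "T \<subseteq> {1..n} - (v \<union> d)" "card T = n + 1 - 2 * k"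
    using obtain_subset_with_card_n by metis
  have "{y. y \<subseteq> T \<and> card y = k} \<subseteq> kneser_nbrs n k v \<inter> kneser_nbrs n k d"
    using T(1) by (auto simp: kneser_nbrs_def kneser_verts_iff kneser_adj_def)
  then have "card {y. y \<subseteq> T \<and> card y = k} \<le> card (kneser_nbrs n k v \<inter> kneser_nbrs n k d)"
    by (intro card_mono) (simp_all add: finite_kneser_nbrs)
  moreover have "finite T"
    using T(1) finite_subset by blast
  ultimately show ?thesis
    using T(2) by (simp add: n_subsets)
qed

lemma card_kneser_star:
  assumes "a \<in> {1..n}" "0 < k"
  shows "card {x \<in> kneser_verts n k. a \<in> x} = (n - 1) choose (k - 1)"
proof -
  have "kneser_verts n k - {x \<in> kneser_verts n k. a \<in> x} = {y. y \<subseteq> {1..n} - {a} \<and> card y = k}"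
    unfolding kneser_verts_def by auto
  then have "card (kneser_verts n k) - card {x \<in> kneser_verts n k. a \<in> x} = (n - 1) choose k"
    using assms by (simp add: card_Diff_subset[symmetric] finite_kneser_verts n_subsets)
  moreover have "card {x \<in> kneser_verts n k. a \<in> x} \<le> card (kneser_verts n k)"
    by (intro card_mono finite_kneser_verts) blast
  moreover have "n choose k = ((n - 1) choose (k - 1)) + ((n - 1) choose k)"
    using assms by (intro choose_reduce_nat) auto
  ultimately show ?thesis
    unfolding card_kneser_verts by linarith
qed

lemma binomial_three_times:
  assumes "0 < k"
  shows "(3 * k) choose k = 3 * ((3 * k - 1) choose (k - 1))"
  using times_binomial_minus1_eq[OF assms, of "3 * k"] assms by simp

definition third_part :: "nat \<Rightarrow> nat set \<Rightarrow> nat set \<Rightarrow> nat set" where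
  "third_part n x y = {1..n} - x - y"

lemma third_part_kneser_nbrs:
  assumes "x \<in> kneser_verts (3 * k) k" "y \<in> kneser_nbrs (3 * k) k x"
  shows "third_part (3 * k) x y \<in> kneser_nbrs (3 * k) k x"
    and "third_part (3 * k) x y \<in> kneser_nbrs (3 * k) k y"
    and "third_part (3 * k) x (third_part (3 * k) x y) = y"
proof -
  have y: "y \<in> kneser_verts (3 * k) k" "x \<inter> y = {}"
    using assms(2) by (auto simp: kneser_nbrs_def kneser_adj_def)
  have fin: "finite x" "finite y"
    using assms(1) y(1) finite_kneser_vert by blast+
  have "x \<union> y \<subseteq> {1..3 * k}" "card (x \<union> y) = 2 * k"
    using assms(1) y fin by (auto simp: kneser_verts_iff card_Un_disjoint)
  then have "card ({1..3 * k} - (x \<union> y)) = k"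
    using fin by (simp add: card_Diff_subset)
  moreover have "third_part (3 * k) x y = {1..3 * k} - (x \<union> y)"
    unfolding third_part_def by blast
  ultimately have "third_part (3 * k) x y \<in> kneser_verts (3 * k) k"
    by (simp add: kneser_verts_iff)
  then show "third_part (3 * k) x y \<in> kneser_nbrs (3 * k) k x"
    and "third_part (3 * k) x y \<in> kneser_nbrs (3 * k) k y"
    by (auto simp: kneser_nbrs_def kneser_adj_def third_part_def)
  show "third_part (3 * k) x (third_part (3 * k) x y) = y"
    using y by (auto simp: third_part_def kneser_verts_iff)
qed

section \<open>Cuts of the Kneser graph K(3k, k)\<close>

lemma sum_card_filter_swap:
  assumes "finite A" "finite B"
  shows "(\<Sum>x\<in>A. card {y \<in> B. R x y}) = (\<Sum>y\<in>B. card {x \<in> A. R x y})"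
proof -
  have filter: "card {y \<in> Y. P y} = (\<Sum>y\<in>Y. if P y then 1 else 0)" if "finite Y" for Y :: "'c set" and P
    using that by (simp only: card_eq_sum sum.inter_filter)
  show ?thesis
    using assms by (simp only: filter) (rule sum.swap)
qed

lemma card_Un_image_involution:
  assumes "finite A" "A \<subseteq> N" "\<And>y. y \<in> N \<Longrightarrow> f y \<in> N \<and> f (f y) = y"
  shows "card (A \<union> f ` A) + card {y \<in> A. f y \<in> A} = 2 * card A"
proof -
  have "inj_on f A"
    using assms(2,3) by (metis inj_onI subsetD)
  moreover have "A \<inter> f ` A = {y \<in> A. f y \<in> A}"
    using assms(2,3) by force
  ultimately show ?thesis
    using card_Un_Int[of A "f ` A"] assms(1) by (simp add: card_image)
qed

lemma sum_card_kneser_nbrs_swap: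
  assumes "A \<subseteq> kneser_verts n k" "B \<subseteq> kneser_verts n k"
  shows "(\<Sum>x\<in>A. card (kneser_nbrs n k x \<inter> B)) = (\<Sum>y\<in>B. card (kneser_nbrs n k y \<inter> A))"
proof -
  have fin: "finite A" "finite B"
    using assms finite_kneser_verts finite_subset by blast+
  have "kneser_nbrs n k x \<inter> B = {y \<in> B. kneser_adj x y}" for x
    using assms(2) by (auto simp: kneser_nbrs_def)
  moreover have "kneser_nbrs n k y \<inter> A = {x \<in> A. kneser_adj x y}" for y
    using assms(1) by (auto simp: kneser_nbrs_def kneser_adj_def)
  ultimately show ?thesis
    using sum_card_filter_swap[OF fin] by simp
qed

text \<open>\<open>pairs_meeting k x C\<close> is the union of the pairs \<open>{y, third_part (3 * k) x y}\<close>
  of neighbours of \<open>x\<close> that meet \<open>C\<close>.\<close>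

definition pairs_meeting :: "nat \<Rightarrow> nat set \<Rightarrow> nat set set \<Rightarrow> nat set set" where
  "pairs_meeting k x C =
     {y \<in> kneser_nbrs (3 * k) k x. y \<in> C \<or> third_part (3 * k) x y \<in> C}"

lemma pairs_meeting_component:
  assumes "x \<in> kneser_verts (3 * k) k" "C \<in> components W kneser_adj"
    and "y \<in> pairs_meeting k x C"
  shows "{y, third_part (3 * k) x y} \<inter> W \<subseteq> C"
    and "{y, third_part (3 * k) x y} \<inter> C \<noteq> {}"
proof -
  have "third_part (3 * k) x y \<in> kneser_nbrs (3 * k) k y"
    using assms by (intro third_part_kneser_nbrs) (auto simp: pairs_meeting_def)
  then have "kneser_adj y (third_part (3 * k) x y)" "kneser_adj (third_part (3 * k) x y) y"
    by (auto simp: kneser_nbrs_def kneser_adj_def)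
  then show "{y, third_part (3 * k) x y} \<inter> W \<subseteq> C"
    using assms(3) component_closed[OF symp_kneser_adj assms(2)]
    unfolding pairs_meeting_def by blast
  show "{y, third_part (3 * k) x y} \<inter> C \<noteq> {}"
    using assms(3) by (auto simp: pairs_meeting_def)
qed

lemma sum_card_pairs_meeting_le:
  assumes "x \<in> kneser_verts (3 * k) k" "W \<subseteq> kneser_verts (3 * k) k"
  shows "(\<Sum>C\<in>components W kneser_adj. card (pairs_meeting k x C)) \<le> (2 * k) choose k"
proof -
  let ?K = "components W kneser_adj"
  have fin: "finite ?K"
    using finite_components[OF finite_subset[OF assms(2) finite_kneser_verts]] .
  have "pairs_meeting k x C \<inter> pairs_meeting k x C' = {}"
    if "C \<in> ?K" "C' \<in> ?K" "C \<noteq> C'" for C C'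
  proof (rule ccontr)
    assume "pairs_meeting k x C \<inter> pairs_meeting k x C' \<noteq> {}"
    then obtain y where "y \<in> pairs_meeting k x C" "y \<in> pairs_meeting k x C'"
      by blast
    moreover have "C \<subseteq> W"
      using that(1) by (rule components_subset)
    ultimately have "{y, third_part (3 * k) x y} \<inter> C \<subseteq> C \<inter> C'"
      using pairs_meeting_component(1)[OF assms(1) that(2)] by blast
    then show False
      using pairs_meeting_component(2)[OF assms(1) that(1) \<open>y \<in> pairs_meeting k x C\<close>]
        components_disjoint[OF symp_kneser_adj that] by blast
  qed
  then have "(\<Sum>C\<in>?K. card (pairs_meeting k x C)) = card (\<Union>C\<in>?K. pairs_meeting k x C)"
    using fin by (intro card_UN_disjoint[symmetric])
      (auto simp: pairs_meeting_def intro: finite_subset[OF _ finite_kneser_nbrs])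
  also have "\<dots> \<le> card (kneser_nbrs (3 * k) k x)"
    by (intro card_mono finite_kneser_nbrs) (auto simp: pairs_meeting_def)
  also have "\<dots> = (2 * k) choose k"
    using assms(1) by (simp add: card_kneser_nbrs)
  finally show ?thesis .
qed

lemma card_pairs_meeting:
  assumes "x \<in> kneser_verts (3 * k) k"
  shows "card (pairs_meeting k x C)
      + card {y \<in> kneser_nbrs (3 * k) k x \<inter> C. third_part (3 * k) x y \<in> C}
    = 2 * card (kneser_nbrs (3 * k) k x \<inter> C)"
proof -
  let ?t = "third_part (3 * k) x" and ?A = "kneser_nbrs (3 * k) k x \<inter> C"
  note involution = third_part_kneser_nbrs(1,3)[OF assms]
  have "pairs_meeting k x C = ?A \<union> ?t ` ?A"
  proof (intro equalityI subsetI)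
    fix y assume y: "y \<in> pairs_meeting k x C"
    then have "y = ?t (?t y)" "?t y \<in> kneser_nbrs (3 * k) k x"
      using involution by (auto simp: pairs_meeting_def)
    then show "y \<in> ?A \<union> ?t ` ?A"
      using y unfolding pairs_meeting_def by blast
  next
    fix y assume "y \<in> ?A \<union> ?t ` ?A"
    then show "y \<in> pairs_meeting k x C"
      using involution unfolding pairs_meeting_def by auto
  qed
  moreover have "card (?A \<union> ?t ` ?A) + card {y \<in> ?A. ?t y \<in> ?A} = 2 * card ?A"
    using involution by (intro card_Un_image_involution[of _ "kneser_nbrs (3 * k) k x"])
      (auto simp: finite_kneser_nbrs)
  moreover have "{y \<in> ?A. ?t y \<in> ?A} = {y \<in> ?A. ?t y \<in> C}"
    using involution by auto
  ultimately show ?thesis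
    by simp
qed

lemma sum_card_pairs_within_le:
  assumes "S \<subseteq> kneser_verts (3 * k) k" "C \<subseteq> kneser_verts (3 * k) k"
  shows "(\<Sum>x\<in>S. card {y \<in> kneser_nbrs (3 * k) k x \<inter> C. third_part (3 * k) x y \<in> C})
    \<le> (\<Sum>y\<in>C. card (kneser_nbrs (3 * k) k y \<inter> C))"
proof -
  have finS: "finite S" and finC: "finite C"
    using assms finite_kneser_verts finite_subset by blast+
  have "(\<Sum>x\<in>S. card {y \<in> kneser_nbrs (3 * k) k x \<inter> C. third_part (3 * k) x y \<in> C})
      = (\<Sum>x\<in>S. card {y \<in> C. kneser_adj x y \<and> third_part (3 * k) x y \<in> C})"
    using assms(2) by (intro sum.cong refl arg_cong[where f = card]) (auto simp: kneser_nbrs_def)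
  also have "\<dots> = (\<Sum>y\<in>C. card {x \<in> S. kneser_adj x y \<and> third_part (3 * k) x y \<in> C})"
    using finS finC by (rule sum_card_filter_swap)
  also have "\<dots> \<le> (\<Sum>y\<in>C. card (kneser_nbrs (3 * k) k y \<inter> C))"
  proof (rule sum_mono)
    fix y assume "y \<in> C"
    let ?X = "{x \<in> S. kneser_adj x y \<and> third_part (3 * k) x y \<in> C}"
    have "inj_on (\<lambda>x. third_part (3 * k) x y) ?X"
    proof (rule inj_onI)
      fix u w assume "u \<in> ?X" "w \<in> ?X" "third_part (3 * k) u y = third_part (3 * k) w y"
      moreover have "u \<in> kneser_verts (3 * k) k" "w \<in> kneser_verts (3 * k) k"
        using assms(1) \<open>u \<in> ?X\<close> \<open>w \<in> ?X\<close> by auto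
      then have "u \<subseteq> {1..3 * k}" "w \<subseteq> {1..3 * k}"
        by (simp_all add: kneser_verts_iff)
      ultimately show "u = w"
        unfolding third_part_def kneser_adj_def by blast
    qed
    moreover have "(\<lambda>x. third_part (3 * k) x y) ` ?X \<subseteq> kneser_nbrs (3 * k) k y \<inter> C"
    proof (rule image_subsetI)
      fix x assume "x \<in> ?X"
      then have "x \<in> S" "kneser_adj x y" "third_part (3 * k) x y \<in> C"
        by auto
      moreover have "x \<in> kneser_verts (3 * k) k" "y \<in> kneser_verts (3 * k) k"
        using assms \<open>x \<in> S\<close> \<open>y \<in> C\<close> by auto
      ultimately have "third_part (3 * k) x y \<in> kneser_nbrs (3 * k) k y"
        by (intro third_part_kneser_nbrs(2)) (auto simp: kneser_nbrs_def)
      then show "third_part (3 * k) x y \<in> kneser_nbrs (3 * k) k y \<inter> C"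
        using \<open>third_part (3 * k) x y \<in> C\<close> by blast
    qed
    ultimately show "card ?X \<le> card (kneser_nbrs (3 * k) k y \<inter> C)"
      by (intro card_inj_on_le) (auto simp: finite_kneser_nbrs)
  qed
  finally show ?thesis .
qed

lemma kneser_nbrs_component_subset:
  assumes "S \<subseteq> kneser_verts n k" "C \<in> components (kneser_verts n k - S) kneser_adj" "y \<in> C"
  shows "kneser_nbrs n k y \<subseteq> C \<union> S"
  using component_closed[OF symp_kneser_adj assms(2,3)] kneser_nbrs_subset
  by (force simp: kneser_nbrs_def)

lemma card_kneser_nbrs_component:
  assumes "S \<subseteq> kneser_verts n k" "C \<in> components (kneser_verts n k - S) kneser_adj" "y \<in> C"
  shows "card (kneser_nbrs n k y \<inter> C) + card (kneser_nbrs n k y \<inter> S) = (n - k) choose k"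
proof -
  have "C \<inter> S = {}"
    using assms(2) components_subset by blast
  then have "card (kneser_nbrs n k y) = card (kneser_nbrs n k y \<inter> C) + card (kneser_nbrs n k y \<inter> S)"
    using kneser_nbrs_component_subset[OF assms] finite_kneser_nbrs
    by (subst card_Un_disjoint[symmetric]) (auto intro: arg_cong[where f = card])
  moreover have "y \<in> kneser_verts n k"
    using assms(2,3) components_subset by blast
  ultimately show ?thesis
    by (simp add: card_kneser_nbrs)
qed

lemma card_kneser_nbrs_in_component_less:
  assumes "0 < k" "C \<subseteq> kneser_verts n k" "y \<in> C"
  shows "card (kneser_nbrs n k y \<inter> C) < card C"
proof (rule psubset_card_mono)
  show "finite C"
    using assms(2) finite_kneser_verts finite_subset by blast
  have "y \<notin> kneser_nbrs n k y"
    using assms kneser_adj_irrefl by (auto simp: kneser_nbrs_def)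
  then show "kneser_nbrs n k y \<inter> C \<subset> C"
    using assms(3) by blast
qed

lemma card_kneser_nbrs_in_cut_ge:
  assumes "S \<subseteq> kneser_verts n k" "C \<in> components (kneser_verts n k - S) kneser_adj" "y \<in> C"
    and "d \<in> kneser_verts n k - S - C"
  shows "(n + 1 - 2 * k) choose k \<le> card (kneser_nbrs n k y \<inter> S)"
proof -
  note closed = component_closed[OF symp_kneser_adj assms(2)]
  have y: "y \<in> kneser_verts n k"
    using assms(2,3) components_subset by blast
  have "\<not> kneser_adj y d"
    using closed[OF assms(3)] assms(4) by blast
  have "kneser_nbrs n k y \<inter> kneser_nbrs n k d \<subseteq> S"
  proof
    fix z assume z: "z \<in> kneser_nbrs n k y \<inter> kneser_nbrs n k d"
    have "z \<notin> C"
      using closed[of z d] z assms(4) symp_kneser_adj by (auto simp: kneser_nbrs_def dest: sympD)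
    then show "z \<in> S"
      using kneser_nbrs_component_subset[OF assms(1-3)] z by blast
  qed
  then have "card (kneser_nbrs n k y \<inter> kneser_nbrs n k d) \<le> card (kneser_nbrs n k y \<inter> S)"
    by (intro card_mono) (auto simp: finite_kneser_nbrs)
  then show ?thesis
    using common_kneser_nbrs_ge[OF y _ \<open>\<not> kneser_adj y d\<close>] assms(4) by simp
qed

text \<open>Here \<open>m = |C|\<close>, \<open>X\<close> and \<open>Y\<close> count the neighbours in \<open>C\<close> and in \<open>S\<close>
  of the vertices of \<open>C\<close>, and \<open>G\<close> is the weight of \<open>C\<close>.  The case \<open>3 m \<ge> 2 D\<close> is where
  \<open>k \<ge> 3\<close> is needed.\<close>

lemma component_weight_arith:
  fixes k m D X Y G :: nat
  assumes "3 \<le> k" "1 \<le> m" "0 < D"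
    and "X + Y = D * m" "X \<le> m * (m - 1)" "(k + 1) * m \<le> Y" "Y \<le> G" "2 * Y \<le> G + X"
  shows "2 * D \<le> G" and "2 \<le> m \<Longrightarrow> 2 * D < G"
proof -
  obtain j where m: "m = Suc j"
    using assms(2) by (cases m) auto
  have "2 * D + j \<le> G \<or> 2 * D < G"
  proof (cases "3 * m < 2 * D")
    case True
    \<comment> \<open>\<open>G \<ge> 2 Y - X = 2 D m - 3 X \<ge> 2 D m - 3 m j \<ge> 2 D + j\<close>\<close>
    have "X \<le> m * j"
      using assms(5) m by simp
    moreover have "(3 * m + 1) * j \<le> (2 * D) * j"
      using True by (intro mult_le_mono1) simp
    moreover have "D * m = D * j + D"
      using m by simp
    ultimately show ?thesis
      using assms(4,8) by (simp add: algebra_simps)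
  next
    case False
    have "4 * m \<le> (k + 1) * m"
      using assms(1) by (intro mult_le_mono1) simp
    then show ?thesis
      using assms(6) False assms(3,7) by linarith
  qed
  then show "2 * D \<le> G" and "2 \<le> m \<Longrightarrow> 2 * D < G"
    using m by auto
qed

lemma component_weight_ge:
  assumes "3 \<le> k" "S \<subseteq> kneser_verts (3 * k) k"
    and C: "C \<in> components (kneser_verts (3 * k) k - S) kneser_adj"
    and "d \<in> kneser_verts (3 * k) k - S - C"
  shows "2 * ((2 * k) choose k) \<le> (\<Sum>x\<in>S. card (pairs_meeting k x C))"
    and "2 \<le> card C \<Longrightarrow> 2 * ((2 * k) choose k) < (\<Sum>x\<in>S. card (pairs_meeting k x C))"
proof -
  let ?N = "kneser_nbrs (3 * k) k"
  define X where "X = (\<Sum>y\<in>C. card (?N y \<inter> C))"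
  define Y where "Y = (\<Sum>y\<in>C. card (?N y \<inter> S))"
  define G where "G = (\<Sum>x\<in>S. card (pairs_meeting k x C))"
  have CV: "C \<subseteq> kneser_verts (3 * k) k"
    using components_subset[OF C] by blast
  have finC: "finite C"
    using CV finite_kneser_verts finite_subset by blast
  have m: "1 \<le> card C"
    using components_nonempty[OF symp_kneser_adj C] finC by (simp add: Suc_le_eq card_gt_0_iff)
  have D: "0 < (2 * k) choose k"
    by simp
  have XY: "X + Y = ((2 * k) choose k) * card C"
    using card_kneser_nbrs_component[OF assms(2) C]
    by (simp add: X_def Y_def sum.distrib[symmetric] mult_2)
  have "X \<le> (\<Sum>y\<in>C. card C - 1)"
    unfolding X_def
  proof (rule sum_mono)
    fix y assume "y \<in> C"
    then have "card (?N y \<inter> C) < card C"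
      using card_kneser_nbrs_in_component_less[OF _ CV] assms(1) by simp
    then show "card (?N y \<inter> C) \<le> card C - 1"
      by linarith
  qed
  then have X: "X \<le> card C * (card C - 1)"
    by simp
  have "(\<Sum>y\<in>C. k + 1) \<le> Y"
    unfolding Y_def using card_kneser_nbrs_in_cut_ge[OF assms(2) C _ assms(4)]
    by (intro sum_mono) simp
  then have Y: "(k + 1) * card C \<le> Y"
    by (simp add: mult.commute)
  have Y_swap: "Y = (\<Sum>x\<in>S. card (?N x \<inter> C))"
    unfolding Y_def using sum_card_kneser_nbrs_swap[OF assms(2) CV] by simp
  have YG: "Y \<le> G"
    unfolding Y_swap G_def
    by (intro sum_mono card_mono) (auto simp: pairs_meeting_def finite_kneser_nbrs)
  have "G + (\<Sum>x\<in>S. card {y \<in> ?N x \<inter> C. third_part (3 * k) x y \<in> C}) = 2 * Y"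
    using card_pairs_meeting assms(2)
    unfolding Y_swap G_def sum.distrib[symmetric] sum_distrib_left
    by (intro sum.cong) auto
  then have XYG: "2 * Y \<le> G + X"
    using sum_card_pairs_within_le[OF assms(2) CV] unfolding X_def by linarith
  show "2 * ((2 * k) choose k) \<le> G" and "2 \<le> card C \<Longrightarrow> 2 * ((2 * k) choose k) < G"
    using component_weight_arith[OF assms(1) m D XY X Y YG XYG] by simp_all
qed

lemma sum_component_weights_le:
  assumes "S \<subseteq> kneser_verts (3 * k) k" "W \<subseteq> kneser_verts (3 * k) k"
  shows "(\<Sum>C\<in>components W kneser_adj. \<Sum>x\<in>S. card (pairs_meeting k x C))
    \<le> card S * ((2 * k) choose k)"
proof -
  have "(\<Sum>C\<in>components W kneser_adj. \<Sum>x\<in>S. card (pairs_meeting k x C))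
      = (\<Sum>x\<in>S. \<Sum>C\<in>components W kneser_adj. card (pairs_meeting k x C))"
    by (rule sum.swap)
  also have "\<dots> \<le> (\<Sum>x\<in>S. (2 * k) choose k)"
    using assms sum_card_pairs_meeting_le by (intro sum_mono) blast
  finally show ?thesis
    by simp
qed

lemma kneser_cut_card_ge:
  assumes "3 \<le> k" and cut: "vertex_cut (kneser_verts (3 * k) k) kneser_adj S"
  shows "2 * num_components (kneser_verts (3 * k) k - S) kneser_adj \<le> card S"
    and "card S = 2 * num_components (kneser_verts (3 * k) k - S) kneser_adj
      \<Longrightarrow> independent_set (kneser_verts (3 * k) k) kneser_adj (kneser_verts (3 * k) k - S)"
proof -
  let ?V = "kneser_verts (3 * k) k"
  let ?K = "components (?V - S) kneser_adj"
  define D where "D = (2 * k) choose k"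
  define w where "w C = (\<Sum>x\<in>S. card (pairs_meeting k x C))" for C
  have SV: "S \<subseteq> ?V" and K2: "2 \<le> num_components (?V - S) kneser_adj"
    using cut unfolding vertex_cut_def by auto
  have finK: "finite ?K"
    by (simp add: finite_components finite_kneser_verts)
  have upper: "(\<Sum>C\<in>?K. w C) \<le> card S * D"
    unfolding w_def D_def using SV by (intro sum_component_weights_le) auto
  have weight: "2 * D \<le> w C" "2 \<le> card C \<Longrightarrow> 2 * D < w C" if "C \<in> ?K" for C
    using exists_outside_component[OF symp_kneser_adj K2 that]
      component_weight_ge[OF assms(1) SV that] unfolding D_def w_def by (metis Diff_iff)+
  have "card ?K * (2 * D) \<le> (\<Sum>C\<in>?K. w C)"
    using sum_mono[of ?K "\<lambda>_. 2 * D" w] weight(1) by simp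
  then have "card ?K * (2 * D) \<le> card S * D"
    using upper by (rule order_trans)
  moreover have "0 < D"
    unfolding D_def by simp
  ultimately show "2 * num_components (?V - S) kneser_adj \<le> card S"
    unfolding num_components_def by (simp add: mult_ac)
  assume eq: "card S = 2 * num_components (?V - S) kneser_adj"
  have trivial: "card C \<le> 1" if "C \<in> ?K" for C
  proof (rule ccontr)
    assume "\<not> card C \<le> 1"
    then have "2 * D < w C"
      using weight(2)[OF that] by simp
    then have "(\<Sum>C\<in>?K. 2 * D) < (\<Sum>C\<in>?K. w C)"
      using weight(1) that by (intro sum_strict_mono_ex1[OF finK]) blast+
    then show False
      using upper eq unfolding num_components_def by (simp add: mult_ac)
  qed
  have "x = y" if "x \<in> ?V - S" "y \<in> ?V - S" "kneser_adj x y" for x y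
    using components_trivial_adjacent_eq[OF symp_kneser_adj _ trivial that] finite_kneser_verts by blast
  then show "independent_set ?V kneser_adj (?V - S)"
    unfolding independent_set_def using kneser_adj_irrefl assms(1) by fastforce
qed

lemma kneser_independent_card_le:
  assumes "3 \<le> k" and J: "independent_set (kneser_verts (3 * k) k) kneser_adj J"
  shows "card J \<le> (3 * k - 1) choose (k - 1)"
proof (cases "card J \<le> 1")
  case True
  then show ?thesis
    using zero_less_binomial[of "k - 1" "3 * k - 1"] by linarith
next
  case False
  let ?V = "kneser_verts (3 * k) k"
  have JV: "J \<subseteq> ?V" and edgeless: "\<And>x y. x \<in> J \<Longrightarrow> y \<in> J \<Longrightarrow> \<not> kneser_adj x y"
    using J unfolding independent_set_def by auto
  have V_J: "?V - (?V - J) = J"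
    using JV by blast
  have "num_components J kneser_adj = card J"
    using edgeless by (rule num_components_edgeless)
  then have "vertex_cut ?V kneser_adj (?V - J)" "2 * card J \<le> card (?V - J)"
    using False kneser_cut_card_ge(1)[OF assms(1), of "?V - J"] V_J
    unfolding vertex_cut_def by auto
  moreover have "card (?V - J) = 3 * ((3 * k - 1) choose (k - 1)) - card J"
    using JV assms(1) finite_subset[OF JV finite_kneser_verts]
    by (simp add: card_Diff_subset card_kneser_verts binomial_three_times)
  ultimately show ?thesis
    by linarith
qed

lemma kneser_cut_ratio_ge:
  assumes "3 \<le> k" "vertex_cut (kneser_verts (3 * k) k) kneser_adj S"
  shows "2 \<le> real (card S) / real (num_components (kneser_verts (3 * k) k - S) kneser_adj)"
proof -
  have "2 \<le> num_components (kneser_verts (3 * k) k - S) kneser_adj"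
    using assms(2) unfolding vertex_cut_def by simp
  moreover have "2 * real (num_components (kneser_verts (3 * k) k - S) kneser_adj) \<le> real (card S)"
    using kneser_cut_card_ge(1)[OF assms] by linarith
  ultimately show ?thesis
    by (simp add: le_divide_eq)
qed

lemma kneser_star_cut:
  assumes "3 \<le> k"
  defines "S \<equiv> kneser_verts (3 * k) k - {x \<in> kneser_verts (3 * k) k. 1 \<in> x}"
  shows "vertex_cut (kneser_verts (3 * k) k) kneser_adj S"
    and "real (card S) / real (num_components (kneser_verts (3 * k) k - S) kneser_adj) = 2"
proof -
  let ?V = "kneser_verts (3 * k) k" and ?I = "{x \<in> kneser_verts (3 * k) k. 1 \<in> x}"
  let ?s = "(3 * k - 1) choose (k - 1)"
  have V_S: "?V - S = ?I"
    unfolding S_def by blast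
  have card_I: "card ?I = ?s"
    using assms(1) by (intro card_kneser_star) auto
  have "num_components ?I kneser_adj = ?s"
    using card_I by (subst num_components_edgeless) (auto simp: kneser_adj_def)
  moreover have "k choose (k - 1) \<le> ?s"
    by (rule binomial_right_mono) simp
  then have "2 \<le> ?s"
    using assms(1) binomial_Suc_n[of "k - 1"] by simp
  moreover have "card S = 2 * ?s"
    using card_I assms(1) unfolding S_def
    by (simp add: card_Diff_subset finite_kneser_verts card_kneser_verts binomial_three_times)
  ultimately show "vertex_cut ?V kneser_adj S"
    and "real (card S) / real (num_components (?V - S) kneser_adj) = 2"
    unfolding vertex_cut_def V_S by (auto simp: S_def)
qed

lemma toughness_kneser_3k:
  assumes "3 \<le> k"
  shows "toughness (kneser_verts (3 * k) k) kneser_adj = 2"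
  unfolding toughness_def
proof (rule cInf_eq_minimum)
  show "2 \<in> {real (card S) / real (num_components (kneser_verts (3 * k) k - S) kneser_adj) |S.
      vertex_cut (kneser_verts (3 * k) k) kneser_adj S}"
    using kneser_star_cut[OF assms] by force
qed (use kneser_cut_ratio_ge[OF assms] in blast)

lemma kneser_tough_cut_complement_max_independent:
  assumes "3 \<le> k" and cut: "vertex_cut (kneser_verts (3 * k) k) kneser_adj S"
    and ratio: "real (card S) / real (num_components (kneser_verts (3 * k) k - S) kneser_adj) = 2"
  shows "max_independent_set (kneser_verts (3 * k) k) kneser_adj (kneser_verts (3 * k) k - S)"
proof -
  let ?V = "kneser_verts (3 * k) k"
  have SV: "S \<subseteq> ?V" and "2 \<le> num_components (?V - S) kneser_adj"
    using cut unfolding vertex_cut_def by auto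
  then have eq: "card S = 2 * num_components (?V - S) kneser_adj"
    using ratio by (simp add: divide_eq_eq flip: of_nat_mult)
  then have indep: "independent_set ?V kneser_adj (?V - S)"
    using kneser_cut_card_ge(2)[OF assms(1,2)] by blast
  then have "num_components (?V - S) kneser_adj = card (?V - S)"
    unfolding independent_set_def by (intro num_components_edgeless) blast
  moreover have "card S \<le> card ?V"
    using SV finite_kneser_verts by (rule card_mono[rotated])
  then have "card (?V - S) + card S = 3 * ((3 * k - 1) choose (k - 1))"
    using SV assms(1) finite_subset[OF SV finite_kneser_verts]
    by (simp add: card_Diff_subset card_kneser_verts binomial_three_times)
  ultimately have "card (?V - S) = (3 * k - 1) choose (k - 1)"
    using eq by linarith
  then show ?thesis
    unfolding max_independent_set_def
    using indep kneser_independent_card_le[OF assms(1)] by simp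
qed

theorem theorem5p2:
  shows "toughness (kneser_verts 12 4) kneser_adj = 2 \<and>
    (\<forall>S. vertex_cut (kneser_verts 12 4) kneser_adj S \<and>
         real (card S) / real (num_components (kneser_verts 12 4 - S) kneser_adj) = 2 \<longrightarrow>
       (\<exists>I. max_independent_set (kneser_verts 12 4) kneser_adj I \<and> S = kneser_verts 12 4 - I))"
proof (intro conjI allI impI)
  show "toughness (kneser_verts 12 4) kneser_adj = 2"
    using toughness_kneser_3k[of 4] by simp
  fix S
  assume tough_cut: "vertex_cut (kneser_verts 12 4) kneser_adj S \<and>
    real (card S) / real (num_components (kneser_verts 12 4 - S) kneser_adj) = 2"
  then have "max_independent_set (kneser_verts 12 4) kneser_adj (kneser_verts 12 4 - S)"
    using kneser_tough_cut_complement_max_independent[of 4 S] by simp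
  moreover have "S = kneser_verts 12 4 - (kneser_verts 12 4 - S)"
    using tough_cut unfolding vertex_cut_def by blast
  ultimately show "\<exists>I. max_independent_set (kneser_verts 12 4) kneser_adj I \<and> S = kneser_verts 12 4 - I"
    by blast
qed

end
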